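(* Let $\mathcal H=\mathcal H_A\otimes\mathcal H_B$ with $\mathcal H_A,\mathcal H_B$ finite-dimensional complex Hilbert spaces, and let $S=\{|\alpha_i\rangle\otimes|\beta_i\rangle\}_{i=1}^{|S|}$ be a partial product basis in $\mathcal H$. Suppose $S$ is uncompletable in $\mathcal H$, but $S$ is completable in some local extension $\mathcal H'$ of $\mathcal H$. Define $$\rho_S=\frac{1}{\dim\mathcal H-|S|}\Big(\mathbf 1-\sum_{i=1}^{|S|}|\alpha_i\rangle\langle\alpha_i|\otimes|\beta_i\rangle\langle\beta_i|\Big).$$ Then $\mathcal L_{\mathcal E}(\rho_S)>\mathcal R(\rho_S)$.
   Context: A partial product basis in $\mathcal H_A\otimes\mathcal H_B$ is a set of $k<\dim\mathcal H$ mutually orthogonal unit product vectors $|\alpha_i\rangle\otimes|\beta_i\rangle$. It is completable in a space $\mathcal K\supseteq\mathcal H$ of the form $\mathcal K=\mathcal K_A\otimes\mathcal K_B$ if it can be extended by further mutually orthogonal unit product vectors (product with respect to $\mathcal K_A\otimes\mathcal K_B$) to an orthonormal basis of $\mathcal K$; it is uncompletable in $\mathcal H$ if this is impossible in $\mathcal H$ itself, i.e. fewer than $\dim\mathcal H-k$ additional mutually orthogonal product vectors orthogonal to $S$ can be added. A local extension of $\mathcal H=\mathcal H_A\otimes\mathcal H_B$ is a space $\mathcal H'=(\mathcal H_A\oplus\mathcal H_A')\otimes(\mathcal H_B\oplus\mathcal H_B')$. $\mathcal R(\rho)$ is the rank of $\rho$. For a density matrix $\rho$ on $\mathcal H_A\otimes\mathcal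 H_B$, $\mathcal L_{\mathcal E}(\rho)$ (the optimal ensemble cardinality) is the least number of distinct pure product states $|\psi_i\rangle|\phi_i\rangle$ in a decomposition $\rho=\sum_i p_i|\psi_i\rangle\langle\psi_i|\otimes|\phi_i\rangle\langle\phi_i|$ with $p_i>0$ (such a decomposition exists exactly when $\rho$ is separable). *)

theory Defs
  imports "Jordan_Normal_Form.DL_Rank" "Jordan_Normal_Form.Conjugate"
begin

text \<open>Finite-dimensional Hilbert spaces H_A = C^m, H_B = C^n; vectors of H_A (x) H_B
  are vectors of C^(m*n), with the standard (Kronecker) identification
  index k <-> (k div n, k mod n).\<close>

definition tensor_vec :: "complex vec \<Rightarrow> complex vec \<Rightarrow> complex vec" where
  "tensor_vec a b = vec (dim_vec a * dim_vec b) (\<lambda>k. a $ (k div dim_vec b) * b $ (k mod dim_vec b))"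

definition ket_bra :: "complex vec \<Rightarrow> complex mat" where
  "ket_bra v = mat (dim_vec v) (dim_vec v) (\<lambda>(i,j). v $ i * cnj (v $ j))"

definition orth_prod_family ::
  "nat \<Rightarrow> nat \<Rightarrow> nat \<Rightarrow> (nat \<Rightarrow> complex vec) \<Rightarrow> (nat \<Rightarrow> complex vec) \<Rightarrow> bool" where
  "orth_prod_family m n k \<alpha> \<beta> \<longleftrightarrow>
     (\<forall>l<k. \<alpha> l \<in> carrier_vec m \<and> \<beta> l \<in> carrier_vec n \<and>
            \<alpha> l \<bullet>c \<alpha> l = 1 \<and> \<beta> l \<bullet>c \<beta> l = 1) \<and>
     (\<forall>l<k. \<forall>l'<k. l \<noteq> l' \<longrightarrow>
            tensor_vec (\<alpha> l) (\<beta> l) \<bullet>c tensor_vec (\<alpha> l') (\<beta> l') = 0)"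

definition partial_product_basis ::
  "nat \<Rightarrow> nat \<Rightarrow> nat \<Rightarrow> (nat \<Rightarrow> complex vec) \<Rightarrow> (nat \<Rightarrow> complex vec) \<Rightarrow> bool" where
  "partial_product_basis m n k \<alpha> \<beta> \<longleftrightarrow> orth_prod_family m n k \<alpha> \<beta> \<and> k < m * n"

text \<open>Zero-padding embedding C^d into C^d' (d \<le> d'), i.e. C^d' = C^d \<oplus> C^(d'-d).\<close>
definition pad_vec :: "nat \<Rightarrow> complex vec \<Rightarrow> complex vec" where
  "pad_vec d' v = vec d' (\<lambda>i. if i < dim_vec v then v $ i else 0)"

text \<open>Completable in C^m' (x) C^n': the (embedded) family extends to m'*n' mutually
  orthogonal unit product vectors, i.e. to an orthonormal product basis of C^m' (x) C^n'
  (an orthonormal family of full cardinality is a basis).\<close>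
definition completable_in ::
  "nat \<Rightarrow> nat \<Rightarrow> nat \<Rightarrow> (nat \<Rightarrow> complex vec) \<Rightarrow> (nat \<Rightarrow> complex vec) \<Rightarrow> bool" where
  "completable_in m' n' k \<alpha> \<beta> \<longleftrightarrow>
     (\<exists>\<alpha>' \<beta>'. orth_prod_family m' n' (m' * n') \<alpha>' \<beta>' \<and>
        (\<forall>l<k. \<alpha>' l = pad_vec m' (\<alpha> l) \<and> \<beta>' l = pad_vec n' (\<beta> l)))"

definition rho_S ::
  "nat \<Rightarrow> nat \<Rightarrow> nat \<Rightarrow> (nat \<Rightarrow> complex vec) \<Rightarrow> (nat \<Rightarrow> complex vec) \<Rightarrow> complex mat" where
  "rho_S m n k \<alpha> \<beta> =
     (1 / of_nat (m * n - k)) \<cdot>\<^sub>m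
       mat (m * n) (m * n) (\<lambda>(i, j). (if i = j then 1 else 0) -
          (\<Sum>l<k. ket_bra (tensor_vec (\<alpha> l) (\<beta> l)) $$ (i, j)))"

definition product_decomposition :: "nat \<Rightarrow> nat \<Rightarrow> complex mat \<Rightarrow> nat \<Rightarrow> bool" where
  "product_decomposition m n \<rho> N \<longleftrightarrow>
     (\<exists>p :: nat \<Rightarrow> real. \<exists>\<psi> \<phi>.
        (\<forall>i<N. p i > 0 \<and> \<psi> i \<in> carrier_vec m \<and> \<phi> i \<in> carrier_vec n \<and>
               \<psi> i \<bullet>c \<psi> i = 1 \<and> \<phi> i \<bullet>c \<phi> i = 1) \<and>
        inj_on (\<lambda>i. ket_bra (tensor_vec (\<psi> i) (\<phi> i))) {..<N} \<and>
        \<rho> = mat (m * n) (m * n) (\<lambda>(a, b). \<Sum>i<N. complex_of_real (p i) *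
                 ket_bra (tensor_vec (\<psi> i) (\<phi> i)) $$ (a, b)))"

definition optimal_ensemble_cardinality :: "nat \<Rightarrow> nat \<Rightarrow> complex mat \<Rightarrow> nat" where
  "optimal_ensemble_cardinality m n \<rho> = (LEAST N. product_decomposition m n \<rho> N)"

definition mat_rank :: "complex mat \<Rightarrow> nat" where
  "mat_rank A = vec_space.rank (dim_row A) A"

end

(*
  Write d = m n and c = d - k, so that rho_S = (1 - P) / c, where P is the orthogonal projector
  onto the span of S.  The range of rho_S is orthogonal to S, hence R(rho_S) <= c.

  Let rho_S = sum_i p_i |w_i><w_i| with N unit product vectors w_i.  Since <u|rho_S|u> = 0 for
  u in S, every w_i is orthogonal to S and therefore an eigenvector of rho_S with eigenvalue 1/c.
  Reading <w_i|rho_S|w_i> = sum_j p_j |<w_i|w_j>|^2 = 1/c at its diagonal term gives p_i <= 1/c,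
  and as the weights sum to tr rho_S = 1 this forces N >= c.  For N = c all these inequalities are
  equalities, so the w_i are orthonormal and complete S in H itself, which is excluded.  Thus every
  decomposition has more than c terms.

  Decompositions do exist: restricting the completeness relation of an orthonormal product basis of
  the local extension that extends S to the coordinates of H writes rho_S as a positive combination
  of projectors onto truncated product vectors.  Hence L_E(rho_S) > c >= R(rho_S).
*)

theory Submission
  imports Defs
begin

section \<open>Inner products and tensor products of vectors\<close>

lemma cscalar_prod_eq_sum: "(v :: complex vec) \<bullet>c w = (\<Sum>i<dim_vec w. v $ i * cnj (w $ i))"
  unfolding scalar_prod_def by (simp add: atLeast0LessThan)

lemma cscalar_prod_commute:
  "dim_vec v = dim_vec w \<Longrightarrow> (v :: complex vec) \<bullet>c w = cnj (w \<bullet>c v)"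
  by (simp add: cscalar_prod_eq_sum sum_conjugate mult.commute)

lemma cscalar_prod_self_real: "(v :: complex vec) \<bullet>c v = complex_of_real (Re (v \<bullet>c v))"
  using conjugate_square_ge_0_vec[of v] by (simp add: complex_eq_iff less_eq_complex_def)

lemma dim_tensor_vec [simp]: "dim_vec (tensor_vec a b) = dim_vec a * dim_vec b"
  unfolding tensor_vec_def by simp

lemma index_tensor_vec:
  "x < dim_vec a * dim_vec b \<Longrightarrow> tensor_vec a b $ x = a $ (x div dim_vec b) * b $ (x mod dim_vec b)"
  unfolding tensor_vec_def by simp

lemma less_mult_imp_mod_less: "(x :: nat) < m * n \<Longrightarrow> x mod n < n"
  by (cases "n = 0") auto

lemma sum_div_mod_nat:
  fixes m n :: nat and f :: "nat \<Rightarrow> nat \<Rightarrow> 'a :: comm_monoid_add"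
  shows "(\<Sum>x<m * n. f (x div n) (x mod n)) = (\<Sum>i<m. \<Sum>j<n. f i j)"
proof -
  have "i * n + j < m * n" if "i < m" "j < n" for i j
  proof -
    have "i * n + j < Suc i * n" using that by simp
    also have "\<dots> \<le> m * n" using that by (intro mult_le_mono1) simp
    finally show ?thesis .
  qed
  then have "bij_betw (\<lambda>x. (x div n, x mod n)) {..<m * n} ({..<m} \<times> {..<n})"
    by (intro bij_betwI[where g = "\<lambda>(i, j). i * n + j"])
       (auto simp: less_mult_imp_div_less less_mult_imp_mod_less)
  then show ?thesis
    by (simp add: sum.reindex_bij_betw[symmetric, where h = "\<lambda>x. (x div n, x mod n)"] sum.cartesian_product)
qed

lemma tensor_vec_cscalar_prod:
  assumes "dim_vec a = dim_vec c" "dim_vec b = dim_vec d"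
  shows "tensor_vec a b \<bullet>c tensor_vec c d = (a \<bullet>c c) * (b \<bullet>c d)"
proof -
  have "tensor_vec a b \<bullet>c tensor_vec c d =
      (\<Sum>x<dim_vec c * dim_vec d. a $ (x div dim_vec d) * b $ (x mod dim_vec d) *
         cnj (c $ (x div dim_vec d) * d $ (x mod dim_vec d)))"
    unfolding cscalar_prod_eq_sum using assms by (intro sum.cong) (auto simp: index_tensor_vec)
  also have "\<dots> = (\<Sum>i<dim_vec c. \<Sum>j<dim_vec d. a $ i * cnj (c $ i) * (b $ j * cnj (d $ j)))"
    by (subst sum_div_mod_nat) (simp add: mult_ac)
  also have "\<dots> = (a \<bullet>c c) * (b \<bullet>c d)"
    by (simp add: cscalar_prod_eq_sum sum_product)
  finally show ?thesis .
qed

lemma tensor_vec_smult: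
  "tensor_vec (r \<cdot>\<^sub>v a) (s \<cdot>\<^sub>v b) = (r * s) \<cdot>\<^sub>v tensor_vec a b"
  unfolding tensor_vec_def by (rule eq_vecI) (auto simp: less_mult_imp_div_less less_mult_imp_mod_less)

lemma index_ket_bra:
  "i < dim_vec v \<Longrightarrow> j < dim_vec v \<Longrightarrow> ket_bra v $$ (i, j) = v $ i * cnj (v $ j)"
  unfolding ket_bra_def by simp

section \<open>Orthonormal families and ensembles of pure states\<close>

definition orthonormal_family :: "nat \<Rightarrow> nat \<Rightarrow> (nat \<Rightarrow> complex vec) \<Rightarrow> bool" where
  "orthonormal_family d k u \<longleftrightarrow>
     (\<forall>l<k. u l \<in> carrier_vec d) \<and> (\<forall>l<k. \<forall>l'<k. u l \<bullet>c u l' = (if l = l' then 1 else 0))"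

lemma orthonormal_familyD:
  assumes "orthonormal_family d k u" "l < k"
  shows "u l \<in> carrier_vec d" "l' < k \<Longrightarrow> u l \<bullet>c u l' = (if l = l' then 1 else 0)"
  using assms unfolding orthonormal_family_def by auto

lemma orthonormal_family_carrier: "orthonormal_family d k u \<Longrightarrow> u ` {..<k} \<subseteq> carrier_vec d"
  unfolding orthonormal_family_def by auto

lemma orth_prod_familyD:
  assumes "orth_prod_family m n k \<alpha> \<beta>" "l < k"
  shows "\<alpha> l \<in> carrier_vec m" "\<beta> l \<in> carrier_vec n" "\<alpha> l \<bullet>c \<alpha> l = 1" "\<beta> l \<bullet>c \<beta> l = 1"
  using assms unfolding orth_prod_family_def by auto

lemma orth_prod_family_orthonormal:
  assumes fam: "orth_prod_family m n k \<alpha> \<beta>"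
  shows "orthonormal_family (m * n) k (\<lambda>l. tensor_vec (\<alpha> l) (\<beta> l))"
  unfolding orthonormal_family_def
proof (intro conjI allI impI)
  fix l l' assume l: "l < k" and l': "l' < k"
  have dims: "dim_vec (\<alpha> l) = m" "dim_vec (\<beta> l) = n"
    using orth_prod_familyD(1,2)[OF fam l] by auto
  then show "tensor_vec (\<alpha> l) (\<beta> l) \<in> carrier_vec (m * n)"
    by (intro carrier_vecI) simp
  show "tensor_vec (\<alpha> l) (\<beta> l) \<bullet>c tensor_vec (\<alpha> l') (\<beta> l') = (if l = l' then 1 else 0)"
  proof (cases "l = l'")
    case True
    then show ?thesis
      using tensor_vec_cscalar_prod[of "\<alpha> l" "\<alpha> l" "\<beta> l" "\<beta> l"] orth_prod_familyD(3,4)[OF fam l]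
      by simp
  next
    case False
    have "\<forall>l<k. \<forall>l'<k. l \<noteq> l' \<longrightarrow> tensor_vec (\<alpha> l) (\<beta> l) \<bullet>c tensor_vec (\<alpha> l') (\<beta> l') = 0"
      using fam unfolding orth_prod_family_def by (rule conjunct2)
    then show ?thesis
      using False l l' by simp
  qed
qed

definition ensemble_mat :: "nat \<Rightarrow> nat set \<Rightarrow> (nat \<Rightarrow> real) \<Rightarrow> (nat \<Rightarrow> complex vec) \<Rightarrow> complex mat" where
  "ensemble_mat d J p w = mat d d (\<lambda>(a, b). \<Sum>i\<in>J. complex_of_real (p i) * ket_bra (w i) $$ (a, b))"

lemma product_decomposition_iff:
  "product_decomposition m n \<rho> N \<longleftrightarrow>
     (\<exists>p \<psi> \<phi>. (\<forall>i<N. p i > 0 \<and> \<psi> i \<in> carrier_vec m \<and> \<phi> i \<in> carrier_vec n \<and>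
                       \<psi> i \<bullet>c \<psi> i = 1 \<and> \<phi> i \<bullet>c \<phi> i = 1) \<and>
        inj_on (\<lambda>i. ket_bra (tensor_vec (\<psi> i) (\<phi> i))) {..<N} \<and>
        \<rho> = ensemble_mat (m * n) {..<N} p (\<lambda>i. tensor_vec (\<psi> i) (\<phi> i)))"
  unfolding product_decomposition_def ensemble_mat_def ..

lemma dim_ensemble_mat [simp]:
  "dim_row (ensemble_mat d J p w) = d" "dim_col (ensemble_mat d J p w) = d"
  unfolding ensemble_mat_def by simp_all

lemma index_ensemble_mat:
  assumes w: "w ` J \<subseteq> carrier_vec d" and ab: "a < d" "b < d"
  shows "ensemble_mat d J p w $$ (a, b) = (\<Sum>i\<in>J. p i * (w i $ a * cnj (w i $ b)))"
proof -
  have "ensemble_mat d J p w $$ (a, b) = (\<Sum>i\<in>J. p i * ket_bra (w i) $$ (a, b))"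
    using ab by (simp add: ensemble_mat_def)
  also have "\<dots> = (\<Sum>i\<in>J. p i * (w i $ a * cnj (w i $ b)))"
    using ab w by (intro sum.cong refl) (auto simp: index_ket_bra)
  finally show ?thesis .
qed

lemma ensemble_mat_hermitian:
  assumes w: "w ` J \<subseteq> carrier_vec d" and ab: "a < d" "b < d"
  shows "cnj (ensemble_mat d J p w $$ (a, b)) = ensemble_mat d J p w $$ (b, a)"
  unfolding index_ensemble_mat[OF w ab] index_ensemble_mat[OF w ab(2,1)]
  by (simp add: cnj_sum mult.commute)

lemma ensemble_mat_mult_vec:
  assumes w: "w ` J \<subseteq> carrier_vec d" and v: "v \<in> carrier_vec d"
  shows "ensemble_mat d J p w *\<^sub>v v = vec d (\<lambda>a. \<Sum>i\<in>J. p i * (v \<bullet>c w i) * w i $ a)"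
proof (rule eq_vecI)
  fix a assume "a < dim_vec (vec d (\<lambda>a. \<Sum>i\<in>J. p i * (v \<bullet>c w i) * w i $ a))"
  then have a: "a < d" by simp
  have "(ensemble_mat d J p w *\<^sub>v v) $ a = (\<Sum>b<d. ensemble_mat d J p w $$ (a, b) * v $ b)"
    using a v by (auto simp: scalar_prod_def atLeast0LessThan intro!: sum.cong)
  also have "\<dots> = (\<Sum>b<d. \<Sum>i\<in>J. p i * (w i $ a * cnj (w i $ b)) * v $ b)"
    by (intro sum.cong refl) (simp add: index_ensemble_mat[OF w a] sum_distrib_right)
  also have "\<dots> = (\<Sum>i\<in>J. \<Sum>b<d. p i * (w i $ a * cnj (w i $ b)) * v $ b)"
    by (rule sum.swap)
  also have "\<dots> = (\<Sum>i\<in>J. (p i * w i $ a) * (\<Sum>b<d. v $ b * cnj (w i $ b)))"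
    unfolding sum_distrib_left by (intro sum.cong refl) (simp add: mult_ac)
  also have "\<dots> = (\<Sum>i\<in>J. p i * (v \<bullet>c w i) * w i $ a)"
    using w by (intro sum.cong refl) (auto simp: cscalar_prod_eq_sum mult_ac)
  finally show "(ensemble_mat d J p w *\<^sub>v v) $ a = vec d (\<lambda>a. \<Sum>i\<in>J. p i * (v \<bullet>c w i) * w i $ a) $ a"
    using a by simp
qed simp

lemma ensemble_mat_quadratic_form:
  assumes w: "w ` J \<subseteq> carrier_vec d" and v: "v \<in> carrier_vec d"
  shows "(ensemble_mat d J p w *\<^sub>v v) \<bullet>c v = complex_of_real (\<Sum>i\<in>J. p i * (cmod (v \<bullet>c w i))\<^sup>2)"
proof -
  have dim_v: "dim_vec v = d"
    using v by simp
  have "(ensemble_mat d J p w *\<^sub>v v) \<bullet>c v = (\<Sum>a<d. \<Sum>i\<in>J. p i * (v \<bullet>c w i) * (w i $ a * cnj (v $ a)))"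
    by (simp add: ensemble_mat_mult_vec[OF w v] cscalar_prod_eq_sum dim_v sum_distrib_right mult.assoc)
  also have "\<dots> = (\<Sum>i\<in>J. \<Sum>a<d. p i * (v \<bullet>c w i) * (w i $ a * cnj (v $ a)))"
    by (rule sum.swap)
  also have "\<dots> = (\<Sum>i\<in>J. p i * (v \<bullet>c w i) * (w i \<bullet>c v))"
    by (simp add: cscalar_prod_eq_sum dim_v sum_distrib_left)
  also have "\<dots> = (\<Sum>i\<in>J. p i * (v \<bullet>c w i) * cnj (v \<bullet>c w i))"
    using w dim_v by (intro sum.cong refl) (auto simp: cscalar_prod_commute[of "w _" v])
  also have "\<dots> = complex_of_real (\<Sum>i\<in>J. p i * (cmod (v \<bullet>c w i))\<^sup>2)"
    by (simp only: of_real_sum of_real_mult complex_norm_square mult.assoc)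
  finally show ?thesis .
qed

definition trace :: "'a :: comm_monoid_add mat \<Rightarrow> 'a" where
  "trace A = (\<Sum>a<dim_row A. A $$ (a, a))"

lemma trace_ensemble_mat:
  assumes w: "w ` J \<subseteq> carrier_vec d"
  shows "trace (ensemble_mat d J p w) = (\<Sum>i\<in>J. p i * (w i \<bullet>c w i))"
proof -
  have "trace (ensemble_mat d J p w) = (\<Sum>a<d. \<Sum>i\<in>J. p i * (w i $ a * cnj (w i $ a)))"
    by (simp add: trace_def index_ensemble_mat[OF w])
  also have "\<dots> = (\<Sum>i\<in>J. \<Sum>a<d. p i * (w i $ a * cnj (w i $ a)))"
    by (rule sum.swap)
  also have "\<dots> = (\<Sum>i\<in>J. p i * (w i \<bullet>c w i))"
    using w by (intro sum.cong refl) (auto simp: cscalar_prod_eq_sum sum_distrib_left)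
  finally show ?thesis .
qed

section \<open>The normalised projector onto the orthogonal complement\<close>

lemma orthonormal_projector_mult_vec:
  assumes u: "orthonormal_family d k u" and v: "v \<in> carrier_vec d" and a: "a < d"
  shows "(ensemble_mat d {..<k} (\<lambda>_. 1) u *\<^sub>v v) $ a = (\<Sum>l<k. (v \<bullet>c u l) * u l $ a)"
  using a by (simp add: ensemble_mat_mult_vec[OF orthonormal_family_carrier[OF u] v])

lemma orthonormal_projector_mult_member:
  assumes u: "orthonormal_family d k u" and l: "l < k"
  shows "ensemble_mat d {..<k} (\<lambda>_. 1) u *\<^sub>v u l = u l"
proof (rule eq_vecI)
  have ul: "u l \<in> carrier_vec d"
    using orthonormal_familyD(1)[OF u l] .
  fix a assume "a < dim_vec (u l)"
  then have a: "a < d"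
    using ul by simp
  have "(\<Sum>l'<k. (u l \<bullet>c u l') * u l' $ a) = (\<Sum>l'<k. if l' = l then u l $ a else 0)"
    by (intro sum.cong refl) (auto simp: orthonormal_familyD(2)[OF u l])
  then show "(ensemble_mat d {..<k} (\<lambda>_. 1) u *\<^sub>v u l) $ a = u l $ a"
    using l by (simp add: orthonormal_projector_mult_vec[OF u ul a])
qed (use orthonormal_familyD(1)[OF u l] in simp)

lemma orthonormal_projector_mult_orthogonal:
  assumes u: "orthonormal_family d k u" and v: "v \<in> carrier_vec d"
    and orth: "\<And>l. l < k \<Longrightarrow> v \<bullet>c u l = 0"
  shows "ensemble_mat d {..<k} (\<lambda>_. 1) u *\<^sub>v v = 0\<^sub>v d"
  by (rule eq_vecI) (simp_all del: index_mult_mat_vec add: orthonormal_projector_mult_vec[OF u v] orth)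

definition complement_state :: "nat \<Rightarrow> nat \<Rightarrow> (nat \<Rightarrow> complex vec) \<Rightarrow> complex mat" where
  "complement_state d k u = (1 / of_nat (d - k)) \<cdot>\<^sub>m (1\<^sub>m d - ensemble_mat d {..<k} (\<lambda>_. 1) u)"

lemma dim_complement_state [simp]:
  "dim_row (complement_state d k u) = d" "dim_col (complement_state d k u) = d"
  unfolding complement_state_def by simp_all

lemma complement_state_carrier [simp]: "complement_state d k u \<in> carrier_mat d d"
  by (simp add: carrier_matI)

lemma index_complement_state:
  "a < d \<Longrightarrow> b < d \<Longrightarrow> complement_state d k u $$ (a, b) =
     (1 / of_nat (d - k)) * ((if a = b then 1 else 0) - ensemble_mat d {..<k} (\<lambda>_. 1) u $$ (a, b))"
  unfolding complement_state_def by simp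

lemma rho_S_eq_complement_state:
  "rho_S m n k \<alpha> \<beta> = complement_state (m * n) k (\<lambda>l. tensor_vec (\<alpha> l) (\<beta> l))"
proof (rule eq_matI)
  fix i j assume "i < dim_row (complement_state (m * n) k (\<lambda>l. tensor_vec (\<alpha> l) (\<beta> l)))"
    and "j < dim_col (complement_state (m * n) k (\<lambda>l. tensor_vec (\<alpha> l) (\<beta> l)))"
  then have "i < m * n" "j < m * n" by simp_all
  then show "rho_S m n k \<alpha> \<beta> $$ (i, j) = complement_state (m * n) k (\<lambda>l. tensor_vec (\<alpha> l) (\<beta> l)) $$ (i, j)"
    by (simp add: rho_S_def index_complement_state ensemble_mat_def)
qed (simp_all add: rho_S_def)

lemma complement_state_mult_vec:
  assumes v: "v \<in> carrier_vec d"
  shows "complement_state d k u *\<^sub>v v =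
    (1 / of_nat (d - k)) \<cdot>\<^sub>v (v - ensemble_mat d {..<k} (\<lambda>_. 1) u *\<^sub>v v)"
proof (rule eq_vecI)
  let ?P = "ensemble_mat d {..<k} (\<lambda>_. 1) u" and ?c = "1 / of_nat (d - k) :: complex"
  fix a assume "a < dim_vec (?c \<cdot>\<^sub>v (v - ?P *\<^sub>v v))"
  then have a: "a < d" using v by simp
  have "(complement_state d k u *\<^sub>v v) $ a = (\<Sum>b<d. complement_state d k u $$ (a, b) * v $ b)"
    using a v by (auto simp: scalar_prod_def atLeast0LessThan intro!: sum.cong)
  also have "\<dots> = (\<Sum>b<d. ?c * ((if a = b then v $ b else 0) - ?P $$ (a, b) * v $ b))"
    using a by (intro sum.cong refl) (simp add: index_complement_state algebra_simps)
  also have "\<dots> = ?c * ((\<Sum>b<d. if a = b then v $ b else 0) - (\<Sum>b<d. ?P $$ (a, b) * v $ b))"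
    by (simp only: sum_distrib_left[symmetric] sum_subtractf)
  also have "(\<Sum>b<d. ?P $$ (a, b) * v $ b) = (?P *\<^sub>v v) $ a"
    using a v by (auto simp: scalar_prod_def atLeast0LessThan intro!: sum.cong)
  also have "?c * ((\<Sum>b<d. if a = b then v $ b else 0) - (?P *\<^sub>v v) $ a) = (?c \<cdot>\<^sub>v (v - ?P *\<^sub>v v)) $ a"
    using a v by simp
  finally show "(complement_state d k u *\<^sub>v v) $ a = (?c \<cdot>\<^sub>v (v - ?P *\<^sub>v v)) $ a" .
qed (use v in simp)

lemma complement_state_mult_member:
  assumes u: "orthonormal_family d k u" and l: "l < k"
  shows "complement_state d k u *\<^sub>v u l = 0\<^sub>v d"
  using orthonormal_familyD(1)[OF u l]
  by (intro eq_vecI) (simp_all add: complement_state_mult_vec orthonormal_projector_mult_member[OF u l])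

lemma complement_state_mult_vec_orthogonal:
  assumes u: "orthonormal_family d k u" and v: "v \<in> carrier_vec d"
    and orth: "\<And>l. l < k \<Longrightarrow> v \<bullet>c u l = 0"
  shows "complement_state d k u *\<^sub>v v = (1 / of_nat (d - k)) \<cdot>\<^sub>v v"
  using v by (simp add: complement_state_mult_vec orthonormal_projector_mult_orthogonal[OF u v orth])

lemma trace_complement_state:
  assumes u: "orthonormal_family d k u" and k: "k < d"
  shows "trace (complement_state d k u) = 1"
proof -
  let ?P = "ensemble_mat d {..<k} (\<lambda>_. 1) u"
  have "(\<Sum>a<d. ?P $$ (a, a)) = (\<Sum>l<k. u l \<bullet>c u l)"
    using trace_ensemble_mat[OF orthonormal_family_carrier[OF u], where p = "\<lambda>_. 1"]
    by (simp add: trace_def)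
  also have "\<dots> = of_nat k"
    using orthonormal_familyD(2)[OF u] by simp
  finally have "(\<Sum>a<d. ?P $$ (a, a)) = of_nat k" .
  then have "trace (complement_state d k u) = (of_nat d - of_nat k) / of_nat (d - k)"
    by (simp add: trace_def index_complement_state sum_subtractf sum_divide_distrib[symmetric])
  then show ?thesis
    using k by (simp add: of_nat_diff)
qed

lemma complement_state_hermitian:
  assumes u: "orthonormal_family d k u" and ab: "a < d" "b < d"
  shows "cnj (complement_state d k u $$ (a, b)) = complement_state d k u $$ (b, a)"
  using ensemble_mat_hermitian[OF orthonormal_family_carrier[OF u] ab, where p = "\<lambda>_. 1"] ab
  by (auto simp: index_complement_state)

lemma complement_state_col_orthogonal:
  assumes u: "orthonormal_family d k u" and j: "j < d" and l: "l < k"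
  shows "col (complement_state d k u) j \<bullet>c u l = 0"
proof -
  let ?\<rho> = "complement_state d k u"
  have ul: "u l \<in> carrier_vec d"
    using orthonormal_familyD(1)[OF u l] .
  have "col ?\<rho> j \<bullet>c u l = (\<Sum>a<d. ?\<rho> $$ (a, j) * cnj (u l $ a))"
    using j ul by (auto simp: cscalar_prod_eq_sum intro!: sum.cong)
  also have "\<dots> = cnj (\<Sum>a<d. ?\<rho> $$ (j, a) * u l $ a)"
    using j by (auto simp: cnj_sum complement_state_hermitian[OF u] intro!: sum.cong)
  also have "(\<Sum>a<d. ?\<rho> $$ (j, a) * u l $ a) = (?\<rho> *\<^sub>v u l) $ j"
    using j ul by (auto simp: scalar_prod_def atLeast0LessThan intro!: sum.cong)
  finally show ?thesis
    using j by (simp add: complement_state_mult_member[OF u l])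
qed

section \<open>Ensembles of unit vectors realising the complement state\<close>

lemma weights_card_bound:
  fixes p :: "nat \<Rightarrow> real" and g :: "nat \<Rightarrow> nat \<Rightarrow> real" and c :: nat
  assumes p: "\<And>i. i < N \<Longrightarrow> p i > 0" and sum_p: "(\<Sum>i<N. p i) = 1"
    and g: "\<And>i j. i < N \<Longrightarrow> j < N \<Longrightarrow> g i j \<ge> 0" and g_diag: "\<And>i. i < N \<Longrightarrow> g i i = 1"
    and row: "\<And>i. i < N \<Longrightarrow> (\<Sum>j<N. p j * g i j) = 1 / c" and c: "c > 0"
  shows "c \<le> N" and "N = c \<Longrightarrow> i < N \<Longrightarrow> j < N \<Longrightarrow> i \<noteq> j \<Longrightarrow> g i j = 0"
proof -
  have terms_nonneg: "0 \<le> p j * g i j" if "i < N" "j < N" for i j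
    using p g that by (simp add: less_imp_le)
  have p_le: "p i \<le> 1 / c" if i: "i < N" for i
  proof -
    have "p i * g i i \<le> (\<Sum>j<N. p j * g i j)"
      using i terms_nonneg[OF i] by (intro member_le_sum) auto
    then show ?thesis
      using g_diag[OF i] row[OF i] by simp
  qed
  have "1 \<le> real N / c"
    using sum_mono[of "{..<N}" p "\<lambda>_. 1 / c"] p_le sum_p by simp
  then show "c \<le> N"
    using c by (simp add: field_simps)
  assume Nc: "N = c" and i: "i < N" and j: "j < N" and ij: "i \<noteq> j"
  have "(\<Sum>i<N. 1 / c - p i) = 0"
    using Nc c sum_p by (simp add: sum_subtractf)
  then have p_eq: "p i' = 1 / c" if "i' < N" for i'
    using p_le that by (subst (asm) sum_nonneg_eq_0_iff) auto
  have "(\<Sum>j'<N. p j' * g i j') = p i * g i i + (\<Sum>j'\<in>{..<N} - {i}. p j' * g i j')"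
    using i by (simp add: sum.remove)
  then have "(\<Sum>j'\<in>{..<N} - {i}. p j' * g i j') = 0"
    using row[OF i] p_eq[OF i] g_diag[OF i] by simp
  then have "p j * g i j = 0"
    using i j ij terms_nonneg[OF i] by (subst (asm) sum_nonneg_eq_0_iff) auto
  then show "g i j = 0"
    using p[OF j] by simp
qed

lemma complement_state_ensemble_orthogonal:
  assumes u: "orthonormal_family d k u" and l: "l < k"
    and w: "w ` J \<subseteq> carrier_vec d" and p: "\<And>i. i \<in> J \<Longrightarrow> p i > 0"
    and fin: "finite J" and eq: "complement_state d k u = ensemble_mat d J p w" and i: "i \<in> J"
  shows "w i \<bullet>c u l = 0"
proof -
  have ul: "u l \<in> carrier_vec d"
    using orthonormal_familyD(1)[OF u l] .
  have "complex_of_real (\<Sum>i\<in>J. p i * (cmod (u l \<bullet>c w i))\<^sup>2) = (complement_state d k u *\<^sub>v u l) \<bullet>c u l"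
    using ensemble_mat_quadratic_form[OF w ul] eq by simp
  also have "\<dots> = 0"
    using ul by (simp add: complement_state_mult_member[OF u l])
  finally have "(\<Sum>i\<in>J. p i * (cmod (u l \<bullet>c w i))\<^sup>2) = 0"
    by (simp only: of_real_eq_0_iff)
  then have "p i * (cmod (u l \<bullet>c w i))\<^sup>2 = 0"
    using fin i p by (subst (asm) sum_nonneg_eq_0_iff) (auto simp: less_imp_le)
  then have "u l \<bullet>c w i = 0"
    using p[OF i] by simp
  then show ?thesis
    using w i ul by (subst cscalar_prod_commute) auto
qed

lemma complement_state_ensemble_card:
  assumes u: "orthonormal_family d k u" and k: "k < d"
    and w: "\<And>i. i < N \<Longrightarrow> w i \<in> carrier_vec d \<and> w i \<bullet>c w i = 1" and p: "\<And>i. i < N \<Longrightarrow> p i > 0"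
    and eq: "complement_state d k u = ensemble_mat d {..<N} p w"
  shows "d - k \<le> N" and "N = d - k \<Longrightarrow> i < N \<Longrightarrow> j < N \<Longrightarrow> i \<noteq> j \<Longrightarrow> w i \<bullet>c w j = 0"
proof -
  have wc: "w ` {..<N} \<subseteq> carrier_vec d"
    using w by auto
  define g where "g i j = (cmod (w i \<bullet>c w j))\<^sup>2" for i j
  have "complex_of_real (\<Sum>i<N. p i) = trace (ensemble_mat d {..<N} p w)"
    using w by (simp add: trace_ensemble_mat[OF wc])
  also have "\<dots> = 1"
    using eq trace_complement_state[OF u k] by simp
  finally have sum_p: "(\<Sum>i<N. p i) = 1"
    by (simp only: of_real_eq_1_iff)
  have row: "(\<Sum>j<N. p j * g i j) = 1 / real (d - k)" if i: "i < N" for i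
  proof -
    \<comment> \<open>\<open>w i\<close> is orthogonal to all \<open>u l\<close>, hence an eigenvector for the eigenvalue \<open>1 / (d - k)\<close>.\<close>
    have orth: "\<And>l. l < k \<Longrightarrow> w i \<bullet>c u l = 0"
      using complement_state_ensemble_orthogonal[OF u _ wc _ _ eq] p i by simp
    have "complex_of_real (\<Sum>j<N. p j * g i j) = (ensemble_mat d {..<N} p w *\<^sub>v w i) \<bullet>c w i"
      using ensemble_mat_quadratic_form[OF wc, of "w i" p] w[OF i] by (simp add: g_def)
    also have "\<dots> = ((1 / of_nat (d - k)) \<cdot>\<^sub>v w i) \<bullet>c w i"
      using eq complement_state_mult_vec_orthogonal[OF u _ orth] w[OF i] by simp
    also have "\<dots> = complex_of_real (1 / real (d - k))"
      using w[OF i] smult_scalar_prod_distrib[of "w i" d "conjugate (w i)" "1 / of_nat (d - k)"] by simp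
    finally show ?thesis
      by (simp only: of_real_eq_iff)
  qed
  have g_diag: "g i i = 1" if "i < N" for i
    using w[OF that] by (simp add: g_def)
  note bound = weights_card_bound[of N p g "d - k", OF p sum_p _ g_diag row]
  show "d - k \<le> N"
    using bound(1) k by (simp add: g_def)
  assume "N = d - k" "i < N" "j < N" "i \<noteq> j"
  then have "g i j = 0"
    using bound(2) k by (simp add: g_def)
  then show "w i \<bullet>c w j = 0"
    by (simp add: g_def)
qed

lemma completable_in_extension:
  assumes fam: "orth_prod_family m n k \<alpha> \<beta>" and fam': "orth_prod_family m n N \<psi> \<phi>"
    and dim: "k + N = m * n"
    and orth: "\<And>i l. i < N \<Longrightarrow> l < k \<Longrightarrow> tensor_vec (\<psi> i) (\<phi> i) \<bullet>c tensor_vec (\<alpha> l) (\<beta> l) = 0"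
  shows "completable_in m n k \<alpha> \<beta>"
proof -
  define \<alpha>' where "\<alpha>' l = (if l < k then \<alpha> l else \<psi> (l - k))" for l
  define \<beta>' where "\<beta>' l = (if l < k then \<beta> l else \<phi> (l - k))" for l
  have "orth_prod_family m n (m * n) \<alpha>' \<beta>'"
    unfolding orth_prod_family_def
  proof (intro conjI allI impI)
    fix l assume l: "l < m * n"
    show "\<alpha>' l \<in> carrier_vec m" "\<beta>' l \<in> carrier_vec n" "\<alpha>' l \<bullet>c \<alpha>' l = 1" "\<beta>' l \<bullet>c \<beta>' l = 1"
      using orth_prod_familyD[OF fam, of l] orth_prod_familyD[OF fam', of "l - k"] l dim
      by (auto simp: \<alpha>'_def \<beta>'_def)
  next
    fix l l' assume l: "l < m * n" and l': "l' < m * n" and ll': "l \<noteq> l'"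
    have dims: "dim_vec (tensor_vec (\<psi> i) (\<phi> i)) = dim_vec (tensor_vec (\<alpha> l) (\<beta> l))" if "i < N" "l < k" for i l
      using orth_prod_familyD[OF fam that(2)] orth_prod_familyD[OF fam' that(1)] by (simp add: carrier_vecD)
    show "tensor_vec (\<alpha>' l) (\<beta>' l) \<bullet>c tensor_vec (\<alpha>' l') (\<beta>' l') = 0"
      using orthonormal_familyD(2)[OF orth_prod_family_orthonormal[OF fam]]
        orthonormal_familyD(2)[OF orth_prod_family_orthonormal[OF fam']]
        orth cscalar_prod_commute[OF dims] l l' ll' dim
      by (auto simp: \<alpha>'_def \<beta>'_def)
  qed
  moreover have "\<alpha>' l = pad_vec m (\<alpha> l) \<and> \<beta>' l = pad_vec n (\<beta> l)" if "l < k" for l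
    using orth_prod_familyD(1,2)[OF fam that] that
    by (auto simp: \<alpha>'_def \<beta>'_def pad_vec_def intro!: eq_vecI)
  ultimately show ?thesis
    unfolding completable_in_def by blast
qed

section \<open>Rank of the complement state\<close>

context
  fixes n :: nat
begin

interpretation V: vec_space "TYPE(complex)" n .

lemma lincomb_cscalar_prod:
  assumes B: "finite B" "B \<subseteq> carrier_vec n" and y: "y \<in> carrier_vec n"
  shows "V.lincomb a B \<bullet>c y = (\<Sum>x\<in>B. a x * (x \<bullet>c y))"
proof -
  have "V.lincomb a B \<bullet>c y = (\<Sum>i<n. \<Sum>x\<in>B. a x * (x $ i * cnj (y $ i)))"
    using B y by (auto simp: cscalar_prod_eq_sum V.lincomb_index sum_distrib_right mult.assoc intro!: sum.cong)
  also have "\<dots> = (\<Sum>x\<in>B. \<Sum>i<n. a x * (x $ i * cnj (y $ i)))"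
    by (rule sum.swap)
  also have "\<dots> = (\<Sum>x\<in>B. a x * (x \<bullet>c y))"
    using y by (simp add: cscalar_prod_eq_sum sum_distrib_left)
  finally show ?thesis .
qed

lemma lin_indpt_Un_orthonormal:
  assumes S: "finite S" "S \<subseteq> carrier_vec n" "V.lin_indpt S"
    and u: "orthonormal_family n k u" and orth: "\<And>x l. x \<in> S \<Longrightarrow> l < k \<Longrightarrow> x \<bullet>c u l = 0"
  shows "V.lin_indpt (S \<union> u ` {..<k})"
proof -
  let ?U = "u ` {..<k}"
  have U: "?U \<subseteq> carrier_vec n"
    using orthonormal_family_carrier[OF u] .
  have disj: "S \<inter> ?U = {}"
    using orth orthonormal_familyD(2)[OF u] by fastforce
  have "\<forall>v\<in>S \<union> ?U. a v = 0" if a: "a \<in> S \<union> ?U \<rightarrow> carrier class_ring" and lc: "V.lincomb a (S \<union> ?U) = 0\<^sub>v n" for a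
  proof -
    have aU: "a (u l) = 0" if l: "l < k" for l
    proof -
      have ul: "u l \<in> carrier_vec n"
        using orthonormal_familyD(1)[OF u l] .
      have pair: "x \<bullet>c u l = (if x = u l then 1 else 0)" if "x \<in> S \<union> ?U" for x
        using that orth[of x l] l disj orthonormal_familyD(2)[OF u] by auto
      have "V.lincomb a (S \<union> ?U) \<bullet>c u l = (\<Sum>x\<in>S \<union> ?U. a x * (x \<bullet>c u l))"
        using S U ul by (intro lincomb_cscalar_prod) auto
      also have "\<dots> = (\<Sum>x\<in>S \<union> ?U. if x = u l then a x else 0)"
        using pair by (intro sum.cong refl) simp
      also have "\<dots> = a (u l)"
        using S l by simp
      finally show ?thesis
        using lc ul by simp
    qed
    have "V.lincomb a ?U = 0\<^sub>v n"
      using U aU by (intro V.lincomb_zero) auto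
    then have "V.lincomb a S = 0\<^sub>v n"
      using lc V.lincomb_union[OF S(2) U disj S(1) finite_imageI[OF finite_lessThan]]
        V.lincomb_closed[OF S(2), of a] by simp
    then have "a \<in> S \<rightarrow> {0}"
      using V.not_lindepD[OF S(3) S(1) subset_refl] a by auto
    then show ?thesis
      using aU by auto
  qed
  then show ?thesis
    using S U by (intro V.finite_lin_indpt2) auto
qed

end

lemma rank_add_orthonormal_le:
  fixes A :: "complex mat"
  assumes A: "A \<in> carrier_mat d nc" and u: "orthonormal_family d k u"
    and orth: "\<And>j l. j < nc \<Longrightarrow> l < k \<Longrightarrow> col A j \<bullet>c u l = 0"
  shows "vec_space.rank d A + k \<le> d"
proof -
  interpret V: vec_space "TYPE(complex)" d .
  obtain S where S: "maximal S (\<lambda>T. T \<subseteq> set (cols A) \<and> V.lin_indpt T)"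
    using maximal_exists_superset[of "set (cols A)" "\<lambda>T. T \<subseteq> set (cols A) \<and> V.lin_indpt T" "{}"]
    by (auto simp: V.lin_dep_def)
  have S_cols: "S \<subseteq> set (cols A)" and S_indpt: "V.lin_indpt S"
    using S unfolding maximal_def by auto
  have S_carrier: "S \<subseteq> carrier_vec d"
    using S_cols A cols_dim by blast
  have S_orth: "x \<bullet>c u l = 0" if x: "x \<in> S" and l: "l < k" for x l
  proof -
    obtain j where "j < length (cols A)" "x = cols A ! j"
      using x S_cols by (metis in_set_conv_nth subsetD)
    then have "j < nc" "x = col A j"
      using A by auto
    then show ?thesis
      using orth l by simp
  qed
  have "inj_on u {..<k}"
    using orthonormal_familyD(2)[OF u] by (intro inj_onI) (metis lessThan_iff one_neq_zero)
  then have card_U: "card (u ` {..<k}) = k"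
    by (simp add: card_image)
  have "S \<inter> u ` {..<k} = {}"
    using S_orth orthonormal_familyD(2)[OF u] by fastforce
  then have "card (S \<union> u ` {..<k}) = card S + k"
    using finite_subset[OF S_cols] card_U by (simp add: card_Un_disjoint)
  moreover have "card (S \<union> u ` {..<k}) \<le> d"
    using V.li_le_dim(2)[OF V.fin_dim _ lin_indpt_Un_orthonormal[OF finite_subset[OF S_cols] S_carrier S_indpt u S_orth]]
      S_carrier orthonormal_family_carrier[OF u] V.dim_is_n by simp
  ultimately show ?thesis
    using V.rank_card_indpt[OF A S] by simp
qed

lemma rank_complement_state_le:
  assumes u: "orthonormal_family d k u"
  shows "vec_space.rank d (complement_state d k u) \<le> d - k"
  using rank_add_orthonormal_le[OF complement_state_carrier u complement_state_col_orthogonal[OF u]]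
  by simp


section \<open>Separability via a completion in a local extension\<close>

lemma orthonormal_basis_resolution:
  assumes e: "orthonormal_family D D e"
  shows "ensemble_mat D {..<D} (\<lambda>_. 1) e = 1\<^sub>m D"
proof -
  define U where "U = mat D D (\<lambda>(x, j). e j $ x)"
  define V where "V = mat D D (\<lambda>(j, y). cnj (e j $ y))"
  have carriers: "U \<in> carrier_mat D D" "V \<in> carrier_mat D D"
    unfolding U_def V_def by simp_all
  have "V * U = 1\<^sub>m D"
  proof (rule eq_matI)
    fix i j assume "i < dim_row (1\<^sub>m D)" "j < dim_col (1\<^sub>m D)"
    then have i: "i < D" and j: "j < D" by simp_all
    have "(V * U) $$ (i, j) = (\<Sum>t<D. e j $ t * cnj (e i $ t))"
      using i j by (auto simp: U_def V_def scalar_prod_def atLeast0LessThan mult.commute intro!: sum.cong)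
    also have "\<dots> = e j \<bullet>c e i"
      using orthonormal_familyD(1)[OF e i] by (simp add: cscalar_prod_eq_sum)
    also have "\<dots> = 1\<^sub>m D $$ (i, j)"
      using orthonormal_familyD(2)[OF e j i] i j by simp
    finally show "(V * U) $$ (i, j) = 1\<^sub>m D $$ (i, j)" .
  qed (simp_all add: U_def V_def)
  then have UV: "U * V = 1\<^sub>m D"
    using mat_mult_left_right_inverse carriers by blast
  show ?thesis
  proof (rule eq_matI)
    fix x y assume "x < dim_row (1\<^sub>m D)" "y < dim_col (1\<^sub>m D)"
    then have x: "x < D" and y: "y < D" by simp_all
    have "ensemble_mat D {..<D} (\<lambda>_. 1) e $$ (x, y) = (\<Sum>j<D. e j $ x * cnj (e j $ y))"
      using x y by (simp add: index_ensemble_mat[OF orthonormal_family_carrier[OF e]])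
    also have "\<dots> = (U * V) $$ (x, y)"
      using x y by (auto simp: U_def V_def scalar_prod_def atLeast0LessThan intro!: sum.cong)
    finally show "ensemble_mat D {..<D} (\<lambda>_. 1) e $$ (x, y) = 1\<^sub>m D $$ (x, y)"
      using UV by simp
  qed simp_all
qed

(* Position of the basis vector |i>|j> of C^m (x) C^n, i.e. of index X = i n + j, in C^m' (x) C^n'. *)
definition embed_index :: "nat \<Rightarrow> nat \<Rightarrow> nat \<Rightarrow> nat" where
  "embed_index n n' X = X div n * n' + X mod n"

lemma embed_index_div_mod:
  assumes "X < m * n" "n \<le> n'"
  shows "embed_index n n' X div n' = X div n" "embed_index n n' X mod n' = X mod n"
  using less_mult_imp_mod_less[OF assms(1)] assms(2) by (simp_all add: embed_index_def)

lemma embed_index_less: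
  assumes X: "X < m * n" and mm: "m \<le> m'" and nn: "n \<le> n'"
  shows "embed_index n n' X < m' * n'"
proof -
  have "embed_index n n' X < Suc (X div n) * n'"
    using less_mult_imp_mod_less[OF X] nn by (simp add: embed_index_def)
  also have "\<dots> \<le> m' * n'"
    using less_mult_imp_div_less[OF X] mm by (intro mult_le_mono1) simp
  finally show ?thesis .
qed

lemma embed_index_eq_iff:
  assumes "X < m * n" "Y < m * n" "m \<le> m'" "n \<le> n'"
  shows "embed_index n n' X = embed_index n n' Y \<longleftrightarrow> X = Y"
  using embed_index_div_mod[OF assms(1,4)] embed_index_div_mod[OF assms(2,4)] div_mult_mod_eq
  by metis

lemma index_tensor_vec_embed:
  assumes a: "a \<in> carrier_vec m'" and b: "b \<in> carrier_vec n'" and mm: "m \<le> m'" and nn: "n \<le> n'"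
    and X: "X < m * n"
  shows "tensor_vec a b $ embed_index n n' X = tensor_vec (vec m (($) a)) (vec n (($) b)) $ X"
  using a b X embed_index_less[OF X mm nn] embed_index_div_mod[OF X nn]
    less_mult_imp_div_less[OF X] less_mult_imp_mod_less[OF X]
  by (simp add: index_tensor_vec)

lemma truncate_pad_vec: "v \<in> carrier_vec m \<Longrightarrow> m \<le> m' \<Longrightarrow> vec m (($) (pad_vec m' v)) = v"
  unfolding pad_vec_def by (auto intro!: eq_vecI)

lemma complement_state_eq_truncated_completion:
  assumes fam: "orth_prod_family m n k \<alpha> \<beta>" and k: "k < m * n"
    and mm: "m \<le> m'" and nn: "n \<le> n'" and fam': "orth_prod_family m' n' (m' * n') \<alpha>' \<beta>'"
    and pads: "\<And>l. l < k \<Longrightarrow> \<alpha>' l = pad_vec m' (\<alpha> l) \<and> \<beta>' l = pad_vec n' (\<beta> l)"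
  shows "complement_state (m * n) k (\<lambda>l. tensor_vec (\<alpha> l) (\<beta> l)) =
    ensemble_mat (m * n) {k..<m' * n'} (\<lambda>_. 1 / real (m * n - k))
      (\<lambda>j. tensor_vec (vec m (($) (\<alpha>' j))) (vec n (($) (\<beta>' j))))"
    (is "?\<rho> = ensemble_mat _ _ _ ?t")
proof (rule eq_matI)
  let ?e = "\<lambda>j. tensor_vec (\<alpha>' j) (\<beta>' j)" and ?u = "\<lambda>l. tensor_vec (\<alpha> l) (\<beta> l)"
  let ?D = "m' * n'"
  have kD: "k \<le> ?D"
    using k mm nn by (meson less_imp_le_nat mult_le_mono order_trans)
  have t_carrier: "?t ` J \<subseteq> carrier_vec (m * n)" for J
    by (auto intro!: carrier_vecI)
  have t_low: "?t l = ?u l" if "l < k" for l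
    using pads[OF that] truncate_pad_vec orth_prod_familyD(1,2)[OF fam that] mm nn by simp
  fix X Y assume "X < dim_row (ensemble_mat (m * n) {k..<?D} (\<lambda>_. 1 / real (m * n - k)) ?t)"
    and "Y < dim_col (ensemble_mat (m * n) {k..<?D} (\<lambda>_. 1 / real (m * n - k)) ?t)"
  then have X: "X < m * n" and Y: "Y < m * n" by simp_all
  have e_t: "?e j $ embed_index n n' Z = ?t j $ Z" if "j < ?D" "Z < m * n" for j Z
    using index_tensor_vec_embed[OF orth_prod_familyD(1,2)[OF fam' that(1)] mm nn that(2)] .
  \<comment> \<open>The completeness relation of the product basis of the extension, read at embedded indices.\<close>
  have "(if X = Y then 1 else 0 :: complex) = 1\<^sub>m ?D $$ (embed_index n n' X, embed_index n n' Y)"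
    using embed_index_less[OF X mm nn] embed_index_less[OF Y mm nn] embed_index_eq_iff[OF X Y mm nn] by simp
  also have "\<dots> = ensemble_mat ?D {..<?D} (\<lambda>_. 1) ?e $$ (embed_index n n' X, embed_index n n' Y)"
    using orthonormal_basis_resolution[OF orth_prod_family_orthonormal[OF fam']] by simp
  also have "\<dots> = (\<Sum>j<?D. ?e j $ embed_index n n' X * cnj (?e j $ embed_index n n' Y))"
    using embed_index_less[OF X mm nn] embed_index_less[OF Y mm nn]
    by (simp add: index_ensemble_mat[OF orthonormal_family_carrier[OF orth_prod_family_orthonormal[OF fam']]])
  also have "\<dots> = (\<Sum>j<?D. ?t j $ X * cnj (?t j $ Y))"
    using e_t X Y by simp
  also have "\<dots> = (\<Sum>j<k. ?t j $ X * cnj (?t j $ Y)) + (\<Sum>j\<in>{k..<?D}. ?t j $ X * cnj (?t j $ Y))"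
  proof -
    have split: "{..<?D} = {..<k} \<union> {k..<?D}"
      using kD by auto
    show ?thesis
      unfolding split by (rule sum.union_disjoint) auto
  qed
  also have "(\<Sum>j<k. ?t j $ X * cnj (?t j $ Y)) = ensemble_mat (m * n) {..<k} (\<lambda>_. 1) ?u $$ (X, Y)"
    using X Y t_low by (simp add: index_ensemble_mat[OF orthonormal_family_carrier[OF orth_prod_family_orthonormal[OF fam]]])
  finally have "(if X = Y then 1 else 0) - ensemble_mat (m * n) {..<k} (\<lambda>_. 1) ?u $$ (X, Y) =
      (\<Sum>j\<in>{k..<?D}. ?t j $ X * cnj (?t j $ Y))"
    by simp
  then show "?\<rho> $$ (X, Y) = ensemble_mat (m * n) {k..<?D} (\<lambda>_. 1 / real (m * n - k)) ?t $$ (X, Y)"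
    using X Y by (simp add: index_complement_state index_ensemble_mat[OF t_carrier] sum_distrib_left)
qed simp_all

definition normalize_vec :: "complex vec \<Rightarrow> complex vec" where
  "normalize_vec v = (1 / complex_of_real (sqrt (Re (v \<bullet>c v)))) \<cdot>\<^sub>v v"

lemma normalize_vec_unit:
  assumes v: "v \<in> carrier_vec d" "v \<noteq> 0\<^sub>v d"
  shows "Re (v \<bullet>c v) > 0" "normalize_vec v \<in> carrier_vec d" "normalize_vec v \<bullet>c normalize_vec v = 1"
    "v = complex_of_real (sqrt (Re (v \<bullet>c v))) \<cdot>\<^sub>v normalize_vec v"
proof -
  let ?r = "sqrt (Re (v \<bullet>c v))"
  have "v \<bullet>c v > 0"
    using v by simp
  then show pos: "Re (v \<bullet>c v) > 0"
    by (simp add: less_complex_def)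
  then have r: "?r > 0"
    by simp
  show "normalize_vec v \<in> carrier_vec d"
    using v by (simp add: normalize_vec_def)
  have rr: "complex_of_real ?r * complex_of_real ?r = v \<bullet>c v"
    using pos cscalar_prod_self_real[of v] by (simp flip: of_real_mult)
  have "normalize_vec v \<bullet>c normalize_vec v = (1 / complex_of_real ?r) * (1 / complex_of_real ?r) * (v \<bullet>c v)"
    using v by (simp add: normalize_vec_def conjugate_smult_vec)
  also have "\<dots> = 1"
    using rr \<open>v \<bullet>c v > 0\<close> by (simp add: field_simps)
  finally show "normalize_vec v \<bullet>c normalize_vec v = 1" .
  show "v = complex_of_real ?r \<cdot>\<^sub>v normalize_vec v"
    using r by (simp add: normalize_vec_def smult_smult_assoc)
qed

lemma ket_bra_smult: "ket_bra (c \<cdot>\<^sub>v v) = (c * cnj c) \<cdot>\<^sub>m ket_bra v"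
  unfolding ket_bra_def by (rule eq_matI) auto

(* The definition of a decomposition demands distinct projectors, so equal terms are merged. *)
lemma product_decomposition_merge:
  assumes fin: "finite J" and p: "\<And>j. j \<in> J \<Longrightarrow> p j > 0"
    and unit: "\<And>j. j \<in> J \<Longrightarrow> \<psi> j \<in> carrier_vec m \<and> \<phi> j \<in> carrier_vec n \<and>
                               \<psi> j \<bullet>c \<psi> j = 1 \<and> \<phi> j \<bullet>c \<phi> j = 1"
  shows "\<exists>N. product_decomposition m n (ensemble_mat (m * n) J p (\<lambda>j. tensor_vec (\<psi> j) (\<phi> j))) N"
proof -
  define K where "K j = ket_bra (tensor_vec (\<psi> j) (\<phi> j))" for j
  obtain h where h: "bij_betw h {..<card (K ` J)} (K ` J)"
    using ex_bij_betw_nat_finite[of "K ` J"] fin by (auto simp: atLeast0LessThan)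
  define N where "N = card (K ` J)"
  define rep where "rep i = inv_into J K (h i)" for i
  define q where "q i = (\<Sum>j\<in>{j \<in> J. K j = h i}. p j)" for i
  have h_in: "h i \<in> K ` J" if "i < N" for i
    using h that bij_betwE unfolding N_def by fastforce
  have rep: "rep i \<in> J" "K (rep i) = h i" if "i < N" for i
    using h_in[OF that] unfolding rep_def by (auto intro: inv_into_into f_inv_into_f)
  have "q i > 0" if "i < N" for i
    unfolding q_def using fin rep[OF that] p by (intro sum_pos) auto
  then have units: "\<forall>i<N. q i > 0 \<and> \<psi> (rep i) \<in> carrier_vec m \<and> \<phi> (rep i) \<in> carrier_vec n \<and>
      \<psi> (rep i) \<bullet>c \<psi> (rep i) = 1 \<and> \<phi> (rep i) \<bullet>c \<phi> (rep i) = 1"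
    using rep unit by blast
  moreover have "inj_on (\<lambda>i. K (rep i)) {..<N}"
    using h rep unfolding N_def bij_betw_def inj_on_def by simp
  moreover have "ensemble_mat (m * n) J p (\<lambda>j. tensor_vec (\<psi> j) (\<phi> j)) =
      ensemble_mat (m * n) {..<N} q (\<lambda>i. tensor_vec (\<psi> (rep i)) (\<phi> (rep i)))"
  proof (rule eq_matI)
    fix X Y
    assume "X < dim_row (ensemble_mat (m * n) {..<N} q (\<lambda>i. tensor_vec (\<psi> (rep i)) (\<phi> (rep i))))"
      and "Y < dim_col (ensemble_mat (m * n) {..<N} q (\<lambda>i. tensor_vec (\<psi> (rep i)) (\<phi> (rep i))))"
    then have X: "X < m * n" and Y: "Y < m * n" by simp_all
    have "ensemble_mat (m * n) J p (\<lambda>j. tensor_vec (\<psi> j) (\<phi> j)) $$ (X, Y) =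
        (\<Sum>j\<in>J. complex_of_real (p j) * K j $$ (X, Y))"
      using X Y by (simp add: ensemble_mat_def K_def)
    also have "\<dots> = (\<Sum>P\<in>K ` J. \<Sum>j\<in>{j \<in> J. K j = P}. complex_of_real (p j) * K j $$ (X, Y))"
      by (rule sum.image_gen[OF fin])
    also have "\<dots> = (\<Sum>P\<in>K ` J. complex_of_real (\<Sum>j\<in>{j \<in> J. K j = P}. p j) * P $$ (X, Y))"
      by (intro sum.cong refl) (simp add: of_real_sum sum_distrib_right)
    also have "\<dots> = (\<Sum>i<N. complex_of_real (q i) * K (rep i) $$ (X, Y))"
      using rep unfolding q_def N_def by (subst sum.reindex_bij_betw[OF h, symmetric]) simp
    also have "\<dots> = ensemble_mat (m * n) {..<N} q (\<lambda>i. tensor_vec (\<psi> (rep i)) (\<phi> (rep i))) $$ (X, Y)"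
      using X Y by (simp add: ensemble_mat_def K_def)
    finally show "ensemble_mat (m * n) J p (\<lambda>j. tensor_vec (\<psi> j) (\<phi> j)) $$ (X, Y) =
        ensemble_mat (m * n) {..<N} q (\<lambda>i. tensor_vec (\<psi> (rep i)) (\<phi> (rep i))) $$ (X, Y)" .
  qed simp_all
  ultimately have "product_decomposition m n (ensemble_mat (m * n) J p (\<lambda>j. tensor_vec (\<psi> j) (\<phi> j))) N"
    unfolding product_decomposition_iff K_def
    by (intro exI[of _ q] exI[of _ "\<lambda>i. \<psi> (rep i)"] exI[of _ "\<lambda>i. \<phi> (rep i)"] conjI)
  then show ?thesis ..
qed

lemma ket_bra_tensor_vec_zero:
  assumes a: "a \<in> carrier_vec m" and b: "b \<in> carrier_vec n" and zero: "a = 0\<^sub>v m \<or> b = 0\<^sub>v n"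
    and XY: "X < m * n" "Y < m * n"
  shows "ket_bra (tensor_vec a b) $$ (X, Y) = 0"
  using a b zero XY less_mult_imp_div_less[OF XY(1)] less_mult_imp_mod_less[OF XY(1)]
  by (auto simp: index_ket_bra index_tensor_vec)

lemma ket_bra_tensor_vec_normalize:
  assumes a: "a \<in> carrier_vec m" "a \<noteq> 0\<^sub>v m" and b: "b \<in> carrier_vec n" "b \<noteq> 0\<^sub>v n"
  shows "ket_bra (tensor_vec a b) = complex_of_real (Re (a \<bullet>c a) * Re (b \<bullet>c b)) \<cdot>\<^sub>m
    ket_bra (tensor_vec (normalize_vec a) (normalize_vec b))"
proof -
  let ?c = "complex_of_real (sqrt (Re (a \<bullet>c a)) * sqrt (Re (b \<bullet>c b)))"
  have "tensor_vec a b = tensor_vec (complex_of_real (sqrt (Re (a \<bullet>c a))) \<cdot>\<^sub>v normalize_vec a)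
      (complex_of_real (sqrt (Re (b \<bullet>c b))) \<cdot>\<^sub>v normalize_vec b)"
    using normalize_vec_unit(4)[OF a] normalize_vec_unit(4)[OF b] by (rule arg_cong2)
  also have "\<dots> = ?c \<cdot>\<^sub>v tensor_vec (normalize_vec a) (normalize_vec b)"
    by (simp add: tensor_vec_smult)
  finally have tensor: "tensor_vec a b = ?c \<cdot>\<^sub>v tensor_vec (normalize_vec a) (normalize_vec b)" .
  have "?c * cnj ?c = complex_of_real (Re (a \<bullet>c a) * Re (b \<bullet>c b))"
    using normalize_vec_unit(1)[OF a] normalize_vec_unit(1)[OF b]
    by (simp flip: of_real_mult add: mult_ac)
  then show ?thesis
    unfolding tensor ket_bra_smult by simp
qed

lemma product_decomposition_of_ensemble:
  assumes fin: "finite J" and p: "\<And>j. j \<in> J \<Longrightarrow> p j > 0"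
    and ab: "\<And>j. j \<in> J \<Longrightarrow> a j \<in> carrier_vec m \<and> b j \<in> carrier_vec n"
  shows "\<exists>N. product_decomposition m n (ensemble_mat (m * n) J p (\<lambda>j. tensor_vec (a j) (b j))) N"
proof -
  define J' where "J' = {j \<in> J. a j \<noteq> 0\<^sub>v m \<and> b j \<noteq> 0\<^sub>v n}"
  define q where "q j = p j * (Re (a j \<bullet>c a j) * Re (b j \<bullet>c b j))" for j
  let ?\<psi> = "\<lambda>j. normalize_vec (a j)" and ?\<phi> = "\<lambda>j. normalize_vec (b j)"
  have nonzero: "a j \<in> carrier_vec m" "a j \<noteq> 0\<^sub>v m" "b j \<in> carrier_vec n" "b j \<noteq> 0\<^sub>v n" if "j \<in> J'" for j
    using ab that unfolding J'_def by auto
  have "ensemble_mat (m * n) J p (\<lambda>j. tensor_vec (a j) (b j)) =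
      ensemble_mat (m * n) J' q (\<lambda>j. tensor_vec (?\<psi> j) (?\<phi> j))"
  proof (rule eq_matI)
    fix X Y
    assume "X < dim_row (ensemble_mat (m * n) J' q (\<lambda>j. tensor_vec (?\<psi> j) (?\<phi> j)))"
      and "Y < dim_col (ensemble_mat (m * n) J' q (\<lambda>j. tensor_vec (?\<psi> j) (?\<phi> j)))"
    then have X: "X < m * n" and Y: "Y < m * n" by simp_all
    have zero: "ket_bra (tensor_vec (a j) (b j)) $$ (X, Y) = 0" if "j \<in> J - J'" for j
      using ket_bra_tensor_vec_zero[of "a j" m "b j" n X Y] ab that X Y unfolding J'_def by auto
    have scaled: "complex_of_real (p j) * ket_bra (tensor_vec (a j) (b j)) $$ (X, Y) =
        complex_of_real (q j) * ket_bra (tensor_vec (?\<psi> j) (?\<phi> j)) $$ (X, Y)" if "j \<in> J'" for j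
    proof -
      have "dim_vec (tensor_vec (?\<psi> j) (?\<phi> j)) = m * n"
        using normalize_vec_unit(2)[OF nonzero(1,2)[OF that]] normalize_vec_unit(2)[OF nonzero(3,4)[OF that]] by simp
      then show ?thesis
        using X Y unfolding ket_bra_tensor_vec_normalize[OF nonzero[OF that]]
        by (simp add: ket_bra_def q_def)
    qed
    have "(\<Sum>j\<in>J. complex_of_real (p j) * ket_bra (tensor_vec (a j) (b j)) $$ (X, Y)) =
        (\<Sum>j\<in>J'. complex_of_real (p j) * ket_bra (tensor_vec (a j) (b j)) $$ (X, Y))"
      using fin zero by (intro sum.mono_neutral_right) (auto simp: J'_def)
    also have "\<dots> = (\<Sum>j\<in>J'. complex_of_real (q j) * ket_bra (tensor_vec (?\<psi> j) (?\<phi> j)) $$ (X, Y))"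
      using scaled by (rule sum.cong[OF refl])
    finally show "ensemble_mat (m * n) J p (\<lambda>j. tensor_vec (a j) (b j)) $$ (X, Y) =
        ensemble_mat (m * n) J' q (\<lambda>j. tensor_vec (?\<psi> j) (?\<phi> j)) $$ (X, Y)"
      using X Y by (simp add: ensemble_mat_def)
  qed simp_all
  moreover have "\<exists>N. product_decomposition m n (ensemble_mat (m * n) J' q (\<lambda>j. tensor_vec (?\<psi> j) (?\<phi> j))) N"
  proof (rule product_decomposition_merge)
    show "finite J'"
      using fin by (simp add: J'_def)
    show "q j > 0" if "j \<in> J'" for j
      using p normalize_vec_unit(1)[OF nonzero(1,2)[OF that]] normalize_vec_unit(1)[OF nonzero(3,4)[OF that]] that
      by (simp add: J'_def q_def)
    show "?\<psi> j \<in> carrier_vec m \<and> ?\<phi> j \<in> carrier_vec n \<and> ?\<psi> j \<bullet>c ?\<psi> j = 1 \<and> ?\<phi> j \<bullet>c ?\<phi> j = 1"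
      if "j \<in> J'" for j
      using normalize_vec_unit(2,3)[OF nonzero(1,2)[OF that]] normalize_vec_unit(2,3)[OF nonzero(3,4)[OF that]] by blast
  qed
  ultimately show ?thesis
    by simp
qed

lemma product_decomposition_card_gt:
  assumes fam: "orth_prod_family m n k \<alpha> \<beta>" and k: "k < m * n"
    and not_completable: "\<not> completable_in m n k \<alpha> \<beta>"
    and dec: "product_decomposition m n (rho_S m n k \<alpha> \<beta>) N"
  shows "m * n - k < N"
proof -
  let ?u = "\<lambda>l. tensor_vec (\<alpha> l) (\<beta> l)"
  obtain p \<psi> \<phi> where units: "\<forall>i<N. p i > 0 \<and> \<psi> i \<in> carrier_vec m \<and> \<phi> i \<in> carrier_vec n \<and>
        \<psi> i \<bullet>c \<psi> i = 1 \<and> \<phi> i \<bullet>c \<phi> i = 1"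
    and eq: "rho_S m n k \<alpha> \<beta> = ensemble_mat (m * n) {..<N} p (\<lambda>i. tensor_vec (\<psi> i) (\<phi> i))"
    using dec unfolding product_decomposition_iff by blast
  let ?w = "\<lambda>i. tensor_vec (\<psi> i) (\<phi> i)"
  have u: "orthonormal_family (m * n) k ?u"
    using orth_prod_family_orthonormal[OF fam] .
  have w: "tensor_vec (\<psi> i) (\<phi> i) \<in> carrier_vec (m * n) \<and> tensor_vec (\<psi> i) (\<phi> i) \<bullet>c tensor_vec (\<psi> i) (\<phi> i) = 1"
    if "i < N" for i
    using units that by (auto simp: tensor_vec_cscalar_prod intro!: carrier_vecI)
  have p: "\<And>i. i < N \<Longrightarrow> p i > 0"
    using units by blast
  have eq': "complement_state (m * n) k ?u = ensemble_mat (m * n) {..<N} p (\<lambda>i. tensor_vec (\<psi> i) (\<phi> i))"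
    using eq by (simp add: rho_S_eq_complement_state)
  have card: "m * n - k \<le> N"
      "N = m * n - k \<Longrightarrow> i < N \<Longrightarrow> j < N \<Longrightarrow> i \<noteq> j \<Longrightarrow> ?w i \<bullet>c ?w j = 0" for i j
    using complement_state_ensemble_card[OF u k _ _ eq'] w p by blast+
  have "N \<noteq> m * n - k"
  proof
    assume N: "N = m * n - k"
    have "orth_prod_family m n N \<psi> \<phi>"
      unfolding orth_prod_family_def using units card(2) N by blast
    moreover have "tensor_vec (\<psi> i) (\<phi> i) \<bullet>c ?u l = 0" if "i < N" "l < k" for i l
      using complement_state_ensemble_orthogonal[OF u that(2) _ _ _ eq', of i] w p that
      by (auto simp: image_subset_iff)
    ultimately have "completable_in m n k \<alpha> \<beta>"
      using completable_in_extension[OF fam] N k by simp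
    then show False
      using not_completable by simp
  qed
  then show ?thesis
    using card(1) by simp
qed

lemma rho_S_separable:
  assumes fam: "orth_prod_family m n k \<alpha> \<beta>" and k: "k < m * n"
    and mm: "m \<le> m'" and nn: "n \<le> n'" and completable: "completable_in m' n' k \<alpha> \<beta>"
  shows "\<exists>N. product_decomposition m n (rho_S m n k \<alpha> \<beta>) N"
proof -
  obtain \<alpha>' \<beta>' where fam': "orth_prod_family m' n' (m' * n') \<alpha>' \<beta>'"
    and pads: "\<forall>l<k. \<alpha>' l = pad_vec m' (\<alpha> l) \<and> \<beta>' l = pad_vec n' (\<beta> l)"
    using completable unfolding completable_in_def by blast
  have "rho_S m n k \<alpha> \<beta> = ensemble_mat (m * n) {k..<m' * n'} (\<lambda>_. 1 / real (m * n - k))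
      (\<lambda>j. tensor_vec (vec m (($) (\<alpha>' j))) (vec n (($) (\<beta>' j))))"
    using complement_state_eq_truncated_completion[OF fam k mm nn fam'] pads
    by (simp add: rho_S_eq_complement_state)
  moreover have "\<exists>N. product_decomposition m n (ensemble_mat (m * n) {k..<m' * n'} (\<lambda>_. 1 / real (m * n - k))
      (\<lambda>j. tensor_vec (vec m (($) (\<alpha>' j))) (vec n (($) (\<beta>' j))))) N"
  proof (rule product_decomposition_of_ensemble)
    have "0 < m * n - k"
      using k by simp
    then show "1 / real (m * n - k) > 0"
      by (simp only: zero_less_divide_1_iff of_nat_0_less_iff)
  qed auto
  ultimately show ?thesis
    by simp
qed

lemma mat_rank_rho_S_le:
  assumes fam: "orth_prod_family m n k \<alpha> \<beta>"
  shows "mat_rank (rho_S m n k \<alpha> \<beta>) \<le> m * n - k"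
  using rank_complement_state_le[OF orth_prod_family_orthonormal[OF fam]]
  by (simp add: mat_rank_def rho_S_eq_complement_state)

theorem theorem2:
  fixes m n k :: nat and \<alpha> \<beta> :: "nat \<Rightarrow> complex vec"
  assumes "partial_product_basis m n k \<alpha> \<beta>"
    and "\<not> completable_in m n k \<alpha> \<beta>"
    and "\<exists>m' n'. m \<le> m' \<and> n \<le> n' \<and> completable_in m' n' k \<alpha> \<beta>"
  shows "optimal_ensemble_cardinality m n (rho_S m n k \<alpha> \<beta>) > mat_rank (rho_S m n k \<alpha> \<beta>)"
proof -
  have fam: "orth_prod_family m n k \<alpha> \<beta>" and k: "k < m * n"
    using assms(1) unfolding partial_product_basis_def by auto
  obtain m' n' where "m \<le> m'" "n \<le> n'" "completable_in m' n' k \<alpha> \<beta>"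
    using assms(3) by blast
  then have "\<exists>N. product_decomposition m n (rho_S m n k \<alpha> \<beta>) N"
    using rho_S_separable[OF fam k] by blast
  then have "product_decomposition m n (rho_S m n k \<alpha> \<beta>) (optimal_ensemble_cardinality m n (rho_S m n k \<alpha> \<beta>))"
    unfolding optimal_ensemble_cardinality_def by (rule LeastI_ex)
  then have "m * n - k < optimal_ensemble_cardinality m n (rho_S m n k \<alpha> \<beta>)"
    using product_decomposition_card_gt[OF fam k assms(2)] by blast
  then show ?thesis
    using mat_rank_rho_S_le[OF fam] by simp
qed

end
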